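(* Let $R_0$ be a commutative Noetherian ring. Let $R_0[\mathbb Q]=R_0[a_{ij},\ell_{ij}\ (1\le i\le 2,1\le j\le 3),\psi_{12},\psi_{13},\psi_{23},z_1,z_2]$ be a polynomial ring in these $17$ indeterminates and let $\mathbb Q$ be the complex over $R_0[\mathbb Q]$ described below. Let $R_0[\mathbb B]=R_0[u_{ij}\ (1\le i\le 2,1\le j\le 3),\pi_1,\pi_2,\pi_3,w_1,z_2]$ be a polynomial ring in these $11$ indeterminates and let $\mathbb B$ be the complex over $R_0[\mathbb B]$ described below. Then there is a surjective $R_0$-algebra homomorphism $\Phi:R_0[\mathbb Q]\to R_0[\mathbb B]$ such that the complexes $\mathbb Q\otimes_{R_0[\mathbb Q]}R_0[\mathbb B]$ and $\mathbb B$ are isomorphic.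
   Context: The complex $\mathbb Q$: $0\to R^2\xrightarrow{q_3}R^6\xrightarrow{q_2}R^5\xrightarrow{q_1}R$ (with $R=R_0[\mathbb Q]$). Write $A=(a_{ij})$, $L=(\ell_{ij})$ ($2\times 3$), $P=(\psi_{23},-\psi_{13},\psi_{12})^{\rm T}$, $N=\sum_{i=1}^3(a_{1i}\ell_{2i}-a_{2i}\ell_{1i})$. $q_1=[g_1\ g_2\ g_3\ g_4\ g_5]$ with $g_1=-\det\begin{bmatrix}\psi_{23}&-\psi_{13}&\psi_{12}\\ \ell_{11}&\ell_{12}&\ell_{13}\\ \ell_{21}&\ell_{22}&\ell_{23}\end{bmatrix}-z_2N-z_2z_1$, $g_2=P^{\rm T}A^{\rm T}\begin{bmatrix}\ell_{21}\\-\ell_{11}\end{bmatrix}-z_2(a_{12}a_{23}-a_{13}a_{22})+z_1\psi_{23}$, $g_3=P^{\rm T}A^{\rm T}\begin{bmatrix}\ell_{22}\\-\ell_{12}\end{bmatrix}+z_2(a_{11}a_{23}-a_{13}a_{21})-z_1\psi_{13}$, $g_4=P^{\rm T}A^{\rm T}\begin{bmatrix}\ell_{23}\\-\ell_{13}\end{bmatrix}-z_2(a_{11}a_{22}-a_{12}a_{21})+z_1\psi_{12}$, $g_5=-\det(AL^{\rm T})-z_1N-z_1^2$. $q_2$ ($5\times6$) has columns (rows 1 to 5): $C_1=(\psi_{12}a_{23}-\psi_{13}a_{22}+\psi_{23}a_{21},\ -\ell_{22}\psi_{12}-\ell_{23}\psi_{13}+z_2a_{21},\ \ell_{21}\psi_{12}-\ell_{23}\psi_{23}+z_2a_{22},\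 \ell_{21}\psi_{13}+\ell_{22}\psi_{23}+z_2a_{23},\ 0)$; $C_2=(-\psi_{12}a_{13}+\psi_{13}a_{12}-\psi_{23}a_{11},\ \psi_{12}\ell_{12}+\psi_{13}\ell_{13}-z_2a_{11},\ -\psi_{12}\ell_{11}+\psi_{23}\ell_{13}-z_2a_{12},\ -\psi_{13}\ell_{11}-\psi_{23}\ell_{12}-z_2a_{13},\ 0)$; $C_3=(z_1,\ \ell_{12}\ell_{23}-\ell_{13}\ell_{22},\ -(\ell_{11}\ell_{23}-\ell_{13}\ell_{21}),\ \ell_{11}\ell_{22}-\ell_{12}\ell_{21},\ -z_2)$; $C_4=(a_{12}a_{23}-a_{13}a_{22},\ -(a_{12}\ell_{22}-a_{22}\ell_{12})-(a_{13}\ell_{23}-a_{23}\ell_{13})-z_1,\ a_{12}\ell_{21}-a_{22}\ell_{11},\ a_{13}\ell_{21}-a_{23}\ell_{11},\ -\psi_{23})$; $C_5=(-(a_{11}a_{23}-a_{13}a_{21}),\ a_{11}\ell_{22}-a_{21}\ell_{12},\ -(a_{11}\ell_{21}-a_{21}\ell_{11})-(a_{13}\ell_{23}-a_{23}\ell_{13})-z_1,\ a_{13}\ell_{22}-a_{23}\ell_{12},\ \psi_{13})$; $C_6=(a_{11}a_{22}-a_{12}a_{21},\ a_{11}\ell_{23}-a_{21}\ell_{13},\ a_{12}\ell_{23}-a_{22}\ell_{13},\ -(a_{11}\ell_{21}-a_{21}\ell_{11})-(a_{12}\ell_{22}-a_{22}\ell_{12})-z_1,\ -\psi_{12})$. $q_3$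 ($6\times2$), rows (column 1; column 2): $(a_{11}\ell_{11}+a_{12}\ell_{12}+a_{13}\ell_{13};\ a_{11}\ell_{21}+a_{12}\ell_{22}+a_{13}\ell_{23}+z_1)$, $(a_{21}\ell_{11}+a_{22}\ell_{12}+a_{23}\ell_{13}-z_1;\ a_{21}\ell_{21}+a_{22}\ell_{22}+a_{23}\ell_{23})$, $(-a_{11}\psi_{23}+a_{12}\psi_{13}-a_{13}\psi_{12};\ -a_{21}\psi_{23}+a_{22}\psi_{13}-a_{23}\psi_{12})$, $(-\ell_{12}\psi_{12}-\ell_{13}\psi_{13}+z_2a_{11};\ -\ell_{22}\psi_{12}-\ell_{23}\psi_{13}+z_2a_{21})$, $(\ell_{11}\psi_{12}-\ell_{13}\psi_{23}+z_2a_{12};\ \ell_{21}\psi_{12}-\ell_{23}\psi_{23}+z_2a_{22})$, $(\ell_{11}\psi_{13}+\ell_{12}\psi_{23}+z_2a_{13};\ \ell_{21}\psi_{13}+\ell_{22}\psi_{23}+z_2a_{23})$. The complex $\mathbb B$: $0\to R^2\xrightarrow{b_3}R^6\xrightarrow{b_2}R^5\xrightarrow{b_1}R$ (with $R=R_0[\mathbb B]$). Let $U=(u_{ij})$ ($2\times3$), $\Pi=(\pi_1,\pi_2,\pi_3)^{\rm T}$, $(U\Pi)_1,(U\Pi)_2$ the entries of $U\Pi$, and $\Delta_1=u_{12}u_{23}-u_{13}u_{22}$, $\Delta_2=-(u_{11}u_{23}-u_{13}u_{21})$, $\Delta_3=u_{11}u_{22}-u_{12}u_{21}$. $b_1=[(U\Pi)_1,\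 (U\Pi)_2,\ z_2\Delta_1-w_1\pi_1,\ z_2\Delta_2-w_1\pi_2,\ z_2\Delta_3-w_1\pi_3]$. $b_2$ ($5\times 6$), rows: $((U\Pi)_2,\ 0,\ -w_1,\ -z_2u_{21},\ -z_2u_{22},\ -z_2u_{23})$, $(-(U\Pi)_1,\ w_1,\ 0,\ z_2u_{11},\ z_2u_{12},\ z_2u_{13})$, $(0,\ u_{21},\ -u_{11},\ 0,\ -\pi_3,\ \pi_2)$, $(0,\ u_{22},\ -u_{12},\ \pi_3,\ 0,\ -\pi_1)$, $(0,\ u_{23},\ -u_{13},\ -\pi_2,\ \pi_1,\ 0)$. $b_3$ ($6\times 2$), rows: $(w_1, z_2)$, $((U\Pi)_1,0)$, $((U\Pi)_2,0)$, $(\Delta_1,\pi_1)$, $(\Delta_2,\pi_2)$, $(\Delta_3,\pi_3)$. An isomorphism of complexes means a family of isomorphisms of the modules in each degree commuting with the differentials. *)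

theory Defs
  imports "HOL-Library.Poly_Mapping" "Jordan_Normal_Form.Matrix"
begin

text \<open>The polynomial ring over 'a in the indeterminates of type 'v, realised as
  finitely supported functions from monomials (exponent vectors, themselves
  finitely supported functions 'v to nat) to coefficients.\<close>

type_synonym ('v, 'a) mpoly = "('v \<Rightarrow>\<^sub>0 nat) \<Rightarrow>\<^sub>0 'a"

definition Var :: "'v \<Rightarrow> ('v, 'a::comm_ring_1) mpoly" where
  "Var v = Poly_Mapping.single (Poly_Mapping.single v 1) 1"

definition Const :: "'a::comm_ring_1 \<Rightarrow> ('v, 'a) mpoly" where
  "Const c = Poly_Mapping.single 0 c"

definition R0_algebra_hom :: "(('v, 'a::comm_ring_1) mpoly \<Rightarrow> ('w, 'a) mpoly) \<Rightarrow> bool" where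
  "R0_algebra_hom f \<longleftrightarrow>
     (\<forall>x y. f (x + y) = f x + f y) \<and> (\<forall>x y. f (x * y) = f x * f y) \<and> f 1 = 1 \<and>
     (\<forall>c. f (Const c) = Const c)"

definition is_ideal :: "'a::comm_ring_1 set \<Rightarrow> bool" where
  "is_ideal I \<longleftrightarrow> 0 \<in> I \<and> (\<forall>x\<in>I. \<forall>y\<in>I. x + y \<in> I) \<and> (\<forall>r. \<forall>x\<in>I. r * x \<in> I)"

definition noetherian_ring :: "'a::comm_ring_1 itself \<Rightarrow> bool" where
  "noetherian_ring (T :: 'a itself) \<longleftrightarrow>
     (\<forall>I :: nat \<Rightarrow> 'a set. (\<forall>n. is_ideal (I n)) \<and> (\<forall>n. I n \<subseteq> I (Suc n))
        \<longrightarrow> (\<exists>N. \<forall>n\<ge>N. I n = I N))"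

datatype qvar = A11 | A12 | A13 | A21 | A22 | A23
  | L11 | L12 | L13 | L21 | L22 | L23 | Psi12 | Psi13 | Psi23 | Z1 | Z2

datatype bvar = U11 | U12 | U13 | U21 | U22 | U23 | Pi1 | Pi2 | Pi3 | W1 | BZ2

definition det3 :: "'a::comm_ring_1 \<Rightarrow> 'a \<Rightarrow> 'a \<Rightarrow> 'a \<Rightarrow> 'a \<Rightarrow> 'a \<Rightarrow> 'a \<Rightarrow> 'a \<Rightarrow> 'a \<Rightarrow> 'a" where
  "det3 a b c d e f g h i = a * (e * i - f * h) - b * (d * i - f * g) + c * (d * h - e * g)"

context
  fixes T :: "'a::comm_ring_1 itself"
begin

abbreviation (input) "qv v \<equiv> (Var v :: (qvar, 'a) mpoly)"

definition Qnum :: "(qvar, 'a) mpoly" where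
  "Qnum = (qv A11 * qv L21 - qv A21 * qv L11) + (qv A12 * qv L22 - qv A22 * qv L12)
        + (qv A13 * qv L23 - qv A23 * qv L13)"

text \<open>PAt x y = P^T A^T [x; -y].\<close>
definition QPAt :: "(qvar, 'a) mpoly \<Rightarrow> (qvar, 'a) mpoly \<Rightarrow> (qvar, 'a) mpoly" where
  "QPAt x y = qv Psi23 * (qv A11 * x - qv A21 * y) - qv Psi13 * (qv A12 * x - qv A22 * y)
            + qv Psi12 * (qv A13 * x - qv A23 * y)"

definition QAL :: "nat \<Rightarrow> nat \<Rightarrow> (qvar, 'a) mpoly" where
  "QAL i k = (let a = (if i = 1 then [qv A11, qv A12, qv A13] else [qv A21, qv A22, qv A23]);
                  l = (if k = 1 then [qv L11, qv L12, qv L13] else [qv L21, qv L22, qv L23])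
              in a!0 * l!0 + a!1 * l!1 + a!2 * l!2)"

definition Qg1 :: "(qvar, 'a) mpoly" where
  "Qg1 = - det3 (qv Psi23) (- qv Psi13) (qv Psi12)
                (qv L11) (qv L12) (qv L13) (qv L21) (qv L22) (qv L23)
         - qv Z2 * Qnum - qv Z2 * qv Z1"

definition Qg2 :: "(qvar, 'a) mpoly" where
  "Qg2 = QPAt (qv L21) (qv L11) - qv Z2 * (qv A12 * qv A23 - qv A13 * qv A22) + qv Z1 * qv Psi23"

definition Qg3 :: "(qvar, 'a) mpoly" where
  "Qg3 = QPAt (qv L22) (qv L12) + qv Z2 * (qv A11 * qv A23 - qv A13 * qv A21) - qv Z1 * qv Psi13"

definition Qg4 :: "(qvar, 'a) mpoly" where
  "Qg4 = QPAt (qv L23) (qv L13) - qv Z2 * (qv A11 * qv A22 - qv A12 * qv A21) + qv Z1 * qv Psi12"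

definition Qg5 :: "(qvar, 'a) mpoly" where
  "Qg5 = - (QAL 1 1 * QAL 2 2 - QAL 1 2 * QAL 2 1) - qv Z1 * Qnum - qv Z1 ^ 2"

definition Qq1 :: "(qvar, 'a) mpoly mat" where
  "Qq1 = mat_of_rows_list 5 [[Qg1, Qg2, Qg3, Qg4, Qg5]]"

text \<open>q2 is given by its six columns C1..C6 (each of length 5).\<close>
definition Qq2 :: "(qvar, 'a) mpoly mat" where
  "Qq2 = transpose_mat (mat_of_rows_list 5
    [ [qv Psi12 * qv A23 - qv Psi13 * qv A22 + qv Psi23 * qv A21,
       - qv L22 * qv Psi12 - qv L23 * qv Psi13 + qv Z2 * qv A21,
       qv L21 * qv Psi12 - qv L23 * qv Psi23 + qv Z2 * qv A22,
       qv L21 * qv Psi13 + qv L22 * qv Psi23 + qv Z2 * qv A23,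
       0],
      [- qv Psi12 * qv A13 + qv Psi13 * qv A12 - qv Psi23 * qv A11,
       qv Psi12 * qv L12 + qv Psi13 * qv L13 - qv Z2 * qv A11,
       - qv Psi12 * qv L11 + qv Psi23 * qv L13 - qv Z2 * qv A12,
       - qv Psi13 * qv L11 - qv Psi23 * qv L12 - qv Z2 * qv A13,
       0],
      [qv Z1,
       qv L12 * qv L23 - qv L13 * qv L22,
       - (qv L11 * qv L23 - qv L13 * qv L21),
       qv L11 * qv L22 - qv L12 * qv L21,
       - qv Z2],
      [qv A12 * qv A23 - qv A13 * qv A22,
       - (qv A12 * qv L22 - qv A22 * qv L12) - (qv A13 * qv L23 - qv A23 * qv L13) - qv Z1,
       qv A12 * qv L21 - qv A22 * qv L11,
       qv A13 * qv L21 - qv A23 * qv L11,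
       - qv Psi23],
      [- (qv A11 * qv A23 - qv A13 * qv A21),
       qv A11 * qv L22 - qv A21 * qv L12,
       - (qv A11 * qv L21 - qv A21 * qv L11) - (qv A13 * qv L23 - qv A23 * qv L13) - qv Z1,
       qv A13 * qv L22 - qv A23 * qv L12,
       qv Psi13],
      [qv A11 * qv A22 - qv A12 * qv A21,
       qv A11 * qv L23 - qv A21 * qv L13,
       qv A12 * qv L23 - qv A22 * qv L13,
       - (qv A11 * qv L21 - qv A21 * qv L11) - (qv A12 * qv L22 - qv A22 * qv L12) - qv Z1,
       - qv Psi12] ])"

definition Qq3 :: "(qvar, 'a) mpoly mat" where
  "Qq3 = mat_of_rows_list 2
    [ [qv A11 * qv L11 + qv A12 * qv L12 + qv A13 * qv L13,
       qv A11 * qv L21 + qv A12 * qv L22 + qv A13 * qv L23 + qv Z1],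
      [qv A21 * qv L11 + qv A22 * qv L12 + qv A23 * qv L13 - qv Z1,
       qv A21 * qv L21 + qv A22 * qv L22 + qv A23 * qv L23],
      [- qv A11 * qv Psi23 + qv A12 * qv Psi13 - qv A13 * qv Psi12,
       - qv A21 * qv Psi23 + qv A22 * qv Psi13 - qv A23 * qv Psi12],
      [- qv L12 * qv Psi12 - qv L13 * qv Psi13 + qv Z2 * qv A11,
       - qv L22 * qv Psi12 - qv L23 * qv Psi13 + qv Z2 * qv A21],
      [qv L11 * qv Psi12 - qv L13 * qv Psi23 + qv Z2 * qv A12,
       qv L21 * qv Psi12 - qv L23 * qv Psi23 + qv Z2 * qv A22],
      [qv L11 * qv Psi13 + qv L12 * qv Psi23 + qv Z2 * qv A13,
       qv L21 * qv Psi13 + qv L22 * qv Psi23 + qv Z2 * qv A23] ]"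

abbreviation (input) "bv v \<equiv> (Var v :: (bvar, 'a) mpoly)"

definition BUPi1 :: "(bvar, 'a) mpoly" where
  "BUPi1 = bv U11 * bv Pi1 + bv U12 * bv Pi2 + bv U13 * bv Pi3"
definition BUPi2 :: "(bvar, 'a) mpoly" where
  "BUPi2 = bv U21 * bv Pi1 + bv U22 * bv Pi2 + bv U23 * bv Pi3"
definition BDelta1 :: "(bvar, 'a) mpoly" where
  "BDelta1 = bv U12 * bv U23 - bv U13 * bv U22"
definition BDelta2 :: "(bvar, 'a) mpoly" where
  "BDelta2 = - (bv U11 * bv U23 - bv U13 * bv U21)"
definition BDelta3 :: "(bvar, 'a) mpoly" where
  "BDelta3 = bv U11 * bv U22 - bv U12 * bv U21"

definition Bb1 :: "(bvar, 'a) mpoly mat" where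
  "Bb1 = mat_of_rows_list 5
    [[BUPi1, BUPi2, bv BZ2 * BDelta1 - bv W1 * bv Pi1,
      bv BZ2 * BDelta2 - bv W1 * bv Pi2, bv BZ2 * BDelta3 - bv W1 * bv Pi3]]"

definition Bb2 :: "(bvar, 'a) mpoly mat" where
  "Bb2 = mat_of_rows_list 6
    [ [BUPi2, 0, - bv W1, - bv BZ2 * bv U21, - bv BZ2 * bv U22, - bv BZ2 * bv U23],
      [- BUPi1, bv W1, 0, bv BZ2 * bv U11, bv BZ2 * bv U12, bv BZ2 * bv U13],
      [0, bv U21, - bv U11, 0, - bv Pi3, bv Pi2],
      [0, bv U22, - bv U12, bv Pi3, 0, - bv Pi1],
      [0, bv U23, - bv U13, - bv Pi2, bv Pi1, 0] ]"

definition Bb3 :: "(bvar, 'a) mpoly mat" where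
  "Bb3 = mat_of_rows_list 2
    [ [bv W1, bv BZ2], [BUPi1, 0], [BUPi2, 0],
      [BDelta1, bv Pi1], [BDelta2, bv Pi2], [BDelta3, bv Pi3] ]"

end

text \<open>Complexes 0 -> R^n3 -d3-> R^n2 -d2-> R^n1 -d1-> R^n0 given by matrices
  (acting on column vectors).\<close>

definition complex_iso3 ::
  "nat \<Rightarrow> nat \<Rightarrow> nat \<Rightarrow> nat \<Rightarrow> 'r::comm_ring_1 mat \<Rightarrow> 'r mat \<Rightarrow> 'r mat \<Rightarrow> 'r mat \<Rightarrow> 'r mat \<Rightarrow> 'r mat \<Rightarrow> bool" where
  "complex_iso3 n0 n1 n2 n3 d1 d2 d3 e1 e2 e3 \<longleftrightarrow>
     (\<exists>f0 f1 f2 f3.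
        f0 \<in> carrier_mat n0 n0 \<and> f1 \<in> carrier_mat n1 n1 \<and>
        f2 \<in> carrier_mat n2 n2 \<and> f3 \<in> carrier_mat n3 n3 \<and>
        invertible_mat f0 \<and> invertible_mat f1 \<and> invertible_mat f2 \<and> invertible_mat f3 \<and>
        f0 * d1 = e1 * f1 \<and> f1 * d2 = e2 * f2 \<and> f2 * d3 = e3 * f3)"

end

theory Submission
  imports Defs
begin

text \<open>The homomorphism \<open>\<Phi>\<close> is the substitution \<open>phi_var\<close>. It is onto because every
  indeterminate of \<open>R\<^sub>0[B]\<close> is, up to sign, the image of an indeterminate of \<open>R\<^sub>0[Q]\<close>,
  except \<open>w\<^sub>1 = \<Phi>(\<ell>\<^sub>1\<^sub>1 - z\<^sub>1)\<close>. After applying \<open>\<Phi>\<close>, the differentials of \<open>Q\<close> agree with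
  those of \<open>B\<close> up to explicit changes of basis: the identity in degree 0, signed permutations
  in degrees 1 and 3, and in degree 2 a signed permutation whose second column is corrected
  by \<open>u\<^sub>1\<^sub>3\<close> and \<open>u\<^sub>2\<^sub>3\<close>.\<close>

definition monomial_subst :: "('v \<Rightarrow> 'b::comm_monoid_mult) \<Rightarrow> ('v \<Rightarrow>\<^sub>0 nat) \<Rightarrow> 'b" where
  "monomial_subst f m = (\<Prod>v\<in>Poly_Mapping.keys m. f v ^ Poly_Mapping.lookup m v)"

definition mpoly_subst :: "('v \<Rightarrow> ('w, 'a::comm_ring_1) mpoly) \<Rightarrow> ('v, 'a) mpoly \<Rightarrow> ('w, 'a) mpoly" where
  "mpoly_subst f p = (\<Sum>m\<in>Poly_Mapping.keys p. Const (Poly_Mapping.lookup p m) * monomial_subst f m)"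

lemma monomial_subst_superset:
  assumes "finite S" "Poly_Mapping.keys m \<subseteq> S"
  shows "monomial_subst f m = (\<Prod>v\<in>S. f v ^ Poly_Mapping.lookup m v)"
  unfolding monomial_subst_def
  by (rule prod.mono_neutral_left) (use assms in \<open>auto simp: in_keys_iff\<close>)

lemma monomial_subst_zero [simp]: "monomial_subst f 0 = 1"
  by (simp add: monomial_subst_def)

lemma monomial_subst_add: "monomial_subst f (m + n) = monomial_subst f m * monomial_subst f n"
proof -
  let ?S = "Poly_Mapping.keys m \<union> Poly_Mapping.keys n"
  have "monomial_subst f (m + n) = (\<Prod>v\<in>?S. f v ^ Poly_Mapping.lookup (m + n) v)"
    by (rule monomial_subst_superset) (use keys_add[of m n] in auto)
  also have "\<dots> = (\<Prod>v\<in>?S. f v ^ Poly_Mapping.lookup m v) * (\<Prod>v\<in>?S. f v ^ Poly_Mapping.lookup n v)"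
    by (simp add: lookup_add power_add prod.distrib)
  also have "\<dots> = monomial_subst f m * monomial_subst f n"
    by (simp add: monomial_subst_superset[symmetric])
  finally show ?thesis .
qed

lemma Const_0 [simp]: "Const 0 = 0"
  by (simp add: Const_def)

lemma Const_1 [simp]: "Const 1 = 1"
  by (simp add: Const_def)

lemma Const_add: "Const (a + b) = Const a + Const b"
  by (simp add: Const_def single_add)

lemma Const_mult: "Const (a * b) = Const a * Const b"
  by (simp add: Const_def mult_single)

lemma poly_mapping_sum_single:
  "p = (\<Sum>k\<in>Poly_Mapping.keys p. Poly_Mapping.single k (Poly_Mapping.lookup p k))"
proof (rule poly_mapping_eqI)
  fix k
  show "Poly_Mapping.lookup p k =
      Poly_Mapping.lookup (\<Sum>k\<in>Poly_Mapping.keys p. Poly_Mapping.single k (Poly_Mapping.lookup p k)) k"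
    by (cases "k \<in> Poly_Mapping.keys p") (auto simp: lookup_sum lookup_single in_keys_iff when_def)
qed

lemma mpoly_subst_superset:
  assumes "finite S" "Poly_Mapping.keys p \<subseteq> S"
  shows "mpoly_subst f p = (\<Sum>m\<in>S. Const (Poly_Mapping.lookup p m) * monomial_subst f m)"
  unfolding mpoly_subst_def
  by (rule sum.mono_neutral_left) (use assms in \<open>auto simp: in_keys_iff\<close>)

lemma mpoly_subst_add: "mpoly_subst f (p + q) = mpoly_subst f p + mpoly_subst f q"
proof -
  let ?S = "Poly_Mapping.keys p \<union> Poly_Mapping.keys q"
  have "mpoly_subst f (p + q) = (\<Sum>m\<in>?S. Const (Poly_Mapping.lookup (p + q) m) * monomial_subst f m)"
    by (rule mpoly_subst_superset) (use keys_add[of p q] in auto)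
  also have "\<dots> = (\<Sum>m\<in>?S. Const (Poly_Mapping.lookup p m) * monomial_subst f m)
                  + (\<Sum>m\<in>?S. Const (Poly_Mapping.lookup q m) * monomial_subst f m)"
    by (simp add: lookup_add Const_add distrib_right sum.distrib)
  also have "\<dots> = mpoly_subst f p + mpoly_subst f q"
    by (simp add: mpoly_subst_superset[symmetric])
  finally show ?thesis .
qed

lemma mpoly_subst_single:
  "mpoly_subst f (Poly_Mapping.single m c) = Const c * monomial_subst f m"
  by (subst mpoly_subst_superset[of "{m}"]) auto

lemma mpoly_subst_zero [simp]: "mpoly_subst f 0 = 0"
  by (simp add: mpoly_subst_def)

lemma mpoly_subst_sum: "mpoly_subst f (sum g A) = (\<Sum>x\<in>A. mpoly_subst f (g x))"
  by (induction A rule: infinite_finite_induct) (auto simp: mpoly_subst_add)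

lemma mpoly_subst_mult: "mpoly_subst f (p * q) = mpoly_subst f p * mpoly_subst f q"
proof -
  let ?K = "Poly_Mapping.keys p" and ?L = "Poly_Mapping.keys q"
  let ?c = "Poly_Mapping.lookup p" and ?d = "Poly_Mapping.lookup q"
  have "p * q = (\<Sum>m\<in>?K. Poly_Mapping.single m (?c m)) * (\<Sum>n\<in>?L. Poly_Mapping.single n (?d n))"
    by (simp flip: poly_mapping_sum_single)
  also have "\<dots> = (\<Sum>m\<in>?K. \<Sum>n\<in>?L. Poly_Mapping.single (m + n) (?c m * ?d n))"
    by (simp add: sum_product mult_single)
  finally have "mpoly_subst f (p * q) =
      (\<Sum>m\<in>?K. \<Sum>n\<in>?L. Const (?c m) * monomial_subst f m * (Const (?d n) * monomial_subst f n))"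
    by (simp add: mpoly_subst_sum mpoly_subst_single Const_mult monomial_subst_add mult_ac)
  also have "\<dots> = mpoly_subst f p * mpoly_subst f q"
    by (simp add: mpoly_subst_def sum_product)
  finally show ?thesis .
qed

lemma mpoly_subst_Const [simp]: "mpoly_subst f (Const c) = Const c"
  by (simp add: Const_def mpoly_subst_single)

lemma mpoly_subst_Var [simp]: "mpoly_subst f (Var v) = f v"
  by (simp add: Var_def mpoly_subst_single monomial_subst_def)

interpretation mpoly_subst: comm_ring_hom "mpoly_subst f" for f
  by unfold_locales (simp_all add: mpoly_subst_add mpoly_subst_mult flip: Const_1)

lemma R0_algebra_hom_mpoly_subst: "R0_algebra_hom (mpoly_subst f)"
  by (simp add: R0_algebra_hom_def hom_distribs)

lemma Var_power: "Var v ^ n = Poly_Mapping.single (Poly_Mapping.single v n) 1"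
proof (induction n)
  case (Suc n)
  then show ?case
    by (simp add: Var_def mult_single flip: single_add)
qed simp

lemma monomial_eq_prod_Var:
  "(Poly_Mapping.single m 1 :: ('v, 'a::comm_ring_1) mpoly) =
    (\<Prod>v\<in>Poly_Mapping.keys m. Var v ^ Poly_Mapping.lookup m v)"
proof -
  have single_add_1:
    "Poly_Mapping.single (k + l) (1::'a) = Poly_Mapping.single k 1 * Poly_Mapping.single l 1"
    for k l :: "'v \<Rightarrow>\<^sub>0 nat"
    by (simp add: mult_single)
  have "Poly_Mapping.single (\<Sum>v\<in>V. Poly_Mapping.single v (Poly_Mapping.lookup m v)) 1
      = (\<Prod>v\<in>V. Var v ^ Poly_Mapping.lookup m v :: ('v, 'a) mpoly)" for V
    by (induction V rule: infinite_finite_induct) (simp_all add: Var_power single_add_1)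
  from this[of "Poly_Mapping.keys m"] show ?thesis
    unfolding poly_mapping_sum_single[of m, symmetric] .
qed

lemma mpoly_induct [case_names Const Var add mult]:
  fixes p :: "('v, 'a::comm_ring_1) mpoly"
  assumes Const: "\<And>c. P (Const c)" and Var: "\<And>v. P (Var v)"
    and add: "\<And>p q. P p \<Longrightarrow> P q \<Longrightarrow> P (p + q)"
    and mult: "\<And>p q. P p \<Longrightarrow> P q \<Longrightarrow> P (p * q)"
  shows "P p"
proof -
  have sum: "P (sum g F)" if "\<And>x. P (g x)" for g and F :: "'c set"
    by (induction F rule: infinite_finite_induct) (use Const[of 0] Const[of 1] that add in simp_all)
  have prod: "P (prod g F)" if "\<And>x. P (g x)" for g and F :: "'c set"
    by (induction F rule: infinite_finite_induct) (use Const[of 1] that mult in simp_all)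
  have power: "P (q ^ n)" if "P q" for q n
    by (induction n) (use Const[of 1] that mult in simp_all)
  have "p = (\<Sum>m\<in>Poly_Mapping.keys p. Const (Poly_Mapping.lookup p m) * Poly_Mapping.single m 1)"
    by (subst poly_mapping_sum_single) (simp add: Const_def mult_single)
  also have "P \<dots>"
    by (auto simp: monomial_eq_prod_Var intro!: sum prod power mult Const Var)
  finally show ?thesis .
qed

lemma surj_mpoly_subst:
  assumes "\<And>w. Var w \<in> range (mpoly_subst f)"
  shows "surj (mpoly_subst f)"
proof -
  have "p \<in> range (mpoly_subst f)" for p
  proof (induction p rule: mpoly_induct)
    case (Const c)
    show ?case by (metis mpoly_subst_Const rangeI)
  next
    case (Var w)
    show ?case by (rule assms)
  next
    case (add p q)
    then show ?case by (auto simp flip: mpoly_subst_add)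
  next
    case (mult p q)
    then show ?case by (auto simp flip: mpoly_subst_mult)
  qed
  then show ?thesis by auto
qed

lemma invertible_matI:
  assumes "A \<in> carrier_mat n n" "B \<in> carrier_mat n n" "A * B = 1\<^sub>m n" "B * A = 1\<^sub>m n"
  shows "invertible_mat A"
  using assms unfolding invertible_mat_def inverts_mat_def by auto

lemma mat_of_rows_list_carrier: "length rs = nr \<Longrightarrow> mat_of_rows_list nc rs \<in> carrier_mat nr nc"
  by (simp add: mat_of_rows_list_def)

lemma invertible_one_mat: "invertible_mat (1\<^sub>m n :: 'a::semiring_1 mat)"
  by (rule invertible_matI[of _ n "1\<^sub>m n"]) auto

lemma invertible_uminus_one_mat: "invertible_mat (- 1\<^sub>m n :: 'a::comm_ring_1 mat)"
  by (rule invertible_matI[of _ n "- 1\<^sub>m n"]) auto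

fun phi_var :: "qvar \<Rightarrow> (bvar, 'a::comm_ring_1) mpoly" where
  "phi_var A11 = 0" | "phi_var A12 = Var U11" | "phi_var A13 = Var U21"
| "phi_var A21 = 1" | "phi_var A22 = 0" | "phi_var A23 = 0"
| "phi_var L11 = Var W1 + Var Pi3" | "phi_var L12 = Var U22" | "phi_var L13 = - Var U12"
| "phi_var L21 = Var BZ2" | "phi_var L22 = 0" | "phi_var L23 = 0"
| "phi_var Psi12 = Var U13" | "phi_var Psi13 = Var U23" | "phi_var Psi23 = Var Pi2"
| "phi_var Z1 = Var Pi3" | "phi_var Z2 = Var Pi1"

fun phi_var_preimage :: "bvar \<Rightarrow> (qvar, 'a::comm_ring_1) mpoly" where
  "phi_var_preimage U11 = Var A12" | "phi_var_preimage U12 = - Var L13"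
| "phi_var_preimage U13 = Var Psi12" | "phi_var_preimage U21 = Var A13"
| "phi_var_preimage U22 = Var L12" | "phi_var_preimage U23 = Var Psi13"
| "phi_var_preimage Pi1 = Var Z2" | "phi_var_preimage Pi2 = Var Psi23"
| "phi_var_preimage Pi3 = Var Z1" | "phi_var_preimage W1 = Var L11 - Var Z1"
| "phi_var_preimage BZ2 = Var L21"

lemma surj_phi: "surj (mpoly_subst phi_var :: (qvar, 'a::comm_ring_1) mpoly \<Rightarrow> _)"
proof (rule surj_mpoly_subst)
  fix w
  have "mpoly_subst phi_var (phi_var_preimage w) = (Var w :: (bvar, 'a) mpoly)"
    by (cases w) (simp_all add: hom_distribs)
  then show "Var w \<in> range (mpoly_subst phi_var :: (qvar, 'a) mpoly \<Rightarrow> _)"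
    by (metis rangeI)
qed

definition iso1 :: "'a::comm_ring_1 mat" where
  "iso1 = mat_of_rows_list 5 [[0,0,0,1,0],[0,0,-1,0,0],[-1,0,0,0,0],[0,1,0,0,0],[0,0,0,0,-1]]"

definition iso1_inv :: "'a::comm_ring_1 mat" where
  "iso1_inv = mat_of_rows_list 5 [[0,0,-1,0,0],[0,0,0,1,0],[0,-1,0,0,0],[1,0,0,0,0],[0,0,0,0,-1]]"

definition iso2 :: "(bvar, 'a::comm_ring_1) mpoly mat" where
  "iso2 = mat_of_rows_list 6 [[0,-1,0,0,0,0],[0,Var U13,0,0,-1,0],[0,Var U23,0,0,0,-1],
     [0,0,0,-1,0,0],[0,0,1,0,0,0],[-1,0,0,0,0,0]]"

definition iso2_inv :: "(bvar, 'a::comm_ring_1) mpoly mat" where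
  "iso2_inv = mat_of_rows_list 6 [[0,0,0,0,0,-1],[-1,0,0,0,0,0],[0,0,0,0,1,0],
     [0,0,0,-1,0,0],[- Var U13,-1,0,0,0,0],[- Var U23,0,-1,0,0,0]]"

lemmas Q_defs = Qg1_def Qg2_def Qg3_def Qg4_def Qg5_def QPAt_def QAL_def Qnum_def det3_def
lemmas B_defs = BUPi1_def BUPi2_def BDelta1_def BDelta2_def BDelta3_def

lemma phi_Qq1_eq_Bb1:
  "1\<^sub>m 1 * map_mat (mpoly_subst phi_var) Qq1 = (Bb1 :: (bvar, 'a::comm_ring_1) mpoly mat) * iso1"
  by (rule eq_matI)
    (auto simp: Qq1_def Bb1_def iso1_def mat_of_rows_list_def scalar_prod_def numeral_eq_Suc less_Suc_eq
      Q_defs B_defs hom_distribs algebra_simps)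

lemma phi_Qq2_eq_Bb2:
  "iso1 * map_mat (mpoly_subst phi_var) Qq2 = (Bb2 :: (bvar, 'a::comm_ring_1) mpoly mat) * iso2"
  by (rule eq_matI)
    (auto simp: Qq2_def Bb2_def iso1_def iso2_def mat_of_rows_list_def scalar_prod_def numeral_eq_Suc
      less_Suc_eq Q_defs B_defs hom_distribs algebra_simps)

lemma phi_Qq3_eq_Bb3:
  "iso2 * map_mat (mpoly_subst phi_var) Qq3 = (Bb3 :: (bvar, 'a::comm_ring_1) mpoly mat) * - 1\<^sub>m 2"
  by (rule eq_matI)
    (auto simp: Qq3_def Bb3_def iso2_def mat_of_rows_list_def scalar_prod_def numeral_eq_Suc
      less_Suc_eq Q_defs B_defs hom_distribs algebra_simps)

lemma carrier_iso1: "iso1 \<in> carrier_mat 5 5" "iso1_inv \<in> carrier_mat 5 5"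
  by (simp_all add: iso1_def iso1_inv_def mat_of_rows_list_carrier)

lemma carrier_iso2: "iso2 \<in> carrier_mat 6 6" "iso2_inv \<in> carrier_mat 6 6"
  by (simp_all add: iso2_def iso2_inv_def mat_of_rows_list_carrier)

lemma invertible_iso1: "invertible_mat iso1"
  by (rule invertible_matI[OF carrier_iso1])
    (auto intro!: eq_matI simp: iso1_def iso1_inv_def mat_of_rows_list_def scalar_prod_def
      numeral_eq_Suc less_Suc_eq)

lemma invertible_iso2: "invertible_mat iso2"
  by (rule invertible_matI[OF carrier_iso2])
    (auto intro!: eq_matI simp: iso2_def iso2_inv_def mat_of_rows_list_def scalar_prod_def
      numeral_eq_Suc less_Suc_eq)

theorem theorem5p10:
  fixes T :: "'a::comm_ring_1 itself"
  assumes "noetherian_ring T"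
  shows "\<exists>\<Phi> :: (qvar, 'a) mpoly \<Rightarrow> (bvar, 'a) mpoly.
           R0_algebra_hom \<Phi> \<and> surj \<Phi> \<and>
           complex_iso3 1 5 6 2
             (map_mat \<Phi> Qq1) (map_mat \<Phi> Qq2) (map_mat \<Phi> Qq3)
             (Bb1 :: (bvar, 'a) mpoly mat) Bb2 Bb3"
proof (intro exI[of _ "mpoly_subst phi_var"] conjI)
  show "R0_algebra_hom (mpoly_subst phi_var)"
    by (rule R0_algebra_hom_mpoly_subst)
  show "surj (mpoly_subst phi_var :: (qvar, 'a) mpoly \<Rightarrow> _)"
    by (rule surj_phi)
  show "complex_iso3 1 5 6 2
      (map_mat (mpoly_subst phi_var) Qq1) (map_mat (mpoly_subst phi_var) Qq2)
      (map_mat (mpoly_subst phi_var) Qq3) (Bb1 :: (bvar, 'a) mpoly mat) Bb2 Bb3"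
    unfolding complex_iso3_def
    by (rule exI[of _ "1\<^sub>m 1"], rule exI[of _ iso1], rule exI[of _ iso2], rule exI[of _ "- 1\<^sub>m 2"])
      (intro conjI one_carrier_mat uminus_carrier_mat carrier_iso1 carrier_iso2 invertible_one_mat
        invertible_iso1 invertible_iso2 invertible_uminus_one_mat
        phi_Qq1_eq_Bb1 phi_Qq2_eq_Bb2 phi_Qq3_eq_Bb3)
qed

end
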